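(* Let $H\in\mathcal{H}_2$, let $n\ge 1$ and $\boldsymbol\mu=(\mu_1,\dots,\mu_n)\in\mathbb{C}_+^n$, and let $P(\boldsymbol\mu)$ be the orthogonal projector of $\mathcal{H}_2$ onto $\mathcal{V}(\boldsymbol\mu)=\operatorname{span}\{v[\mu_j]\}_{j=1}^n$. Suppose $\mathcal{S}\subset\mathcal{H}_2$ admits a parameterization $H_r(\cdot;\boldsymbol\theta)$ such that $\mathcal{S}=\{H_r(\cdot;\boldsymbol\theta):\boldsymbol\theta\in\mathcal{D}\}$ with $\mathcal{D}\subset\mathbb{R}^p$ open. Let $$\mathcal{T}(\boldsymbol\theta)=\operatorname{span}\Big\{\tfrac{\partial H_r(\cdot,\boldsymbol\theta)}{\partial\theta_1},\dots,\tfrac{\partial H_r(\cdot,\boldsymbol\theta)}{\partial\theta_p}\Big\}.$$ If $H_r(\cdot,\widehat{\boldsymbol\theta})$ is a local optimizer of the projected problem $\min_{H_r\in\mathcal{S}}\|P(\boldsymbol\mu)[H-H_r]\|_{\mathcal{H}_2}^2$ and $\operatorname{Range}P(\boldsymbol\mu)\supseteq\mathcal{T}(\widehat{\boldsymbol\theta})$, then $H_r(\cdot,\widehat{\boldsymbol\theta})$ is also a local optimizer of the original problem $\min_{H_r\in\mathcal{S}}\|H-H_r\|_{\mathcal{H}_2}^2$.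
   Context: $\mathcal{H}_2$ denotes the Hilbert space of functions analytic in the right half-plane with inner product $\langle F,G\rangle_{\mathcal{H}_2}=\frac{1}{2\pi}\int_{-\infty}^{\infty}\overline{F(\mathrm{i}\omega)}G(\mathrm{i}\omega)\,d\omega$ and norm $\|F\|_{\mathcal{H}_2}^2=\langle F,F\rangle_{\mathcal{H}_2}$. $\mathbb{C}_+=\{\mu\in\mathbb{C}:\operatorname{Re}\mu>0\}$. For $\mu\in\mathbb{C}_+$, $v[\mu]\in\mathcal{H}_2$ is the reproducing kernel $v[\mu](z)=(z+\overline{\mu})^{-1}$, satisfying $\langle v[\mu],F\rangle_{\mathcal{H}_2}=F(\mu)$. Since $\mathcal{S}$ is nonconvex, "local optimizer" is understood in the sense of the first order optimality conditions: $H_r(\cdot,\widehat{\boldsymbol\theta})$ is a local optimizer of the projected problem if $\langle P(\boldsymbol\mu)[H-H_r(\cdot,\widehat{\boldsymbol\theta})],T\rangle_{\mathcal{H}_2}=0$ for all $T\in\mathcal{T}(\widehat{\boldsymbol\theta})$, and of the original problem if $\langle H-H_r(\cdot,\widehat{\boldsymbol\theta}),T\rangle_{\mathcal{H}_2}=0$ for all $T\in\mathcal{T}(\widehat{\boldsymbol\theta})$. *)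

theory Defs
  imports "HOL-Analysis.Analysis"
begin

definition Cplus :: "complex set" where
  "Cplus = {z. 0 < Re z}"

text \<open>An element is represented by a function
  complex \<Rightarrow> complex that is analytic on the open right half-plane, has uniformly bounded
  L2 norms on the vertical lines Re z = x > 0, and whose values on the imaginary axis are
  its (a.e. radial) boundary values, which are square integrable.\<close>
definition H2 :: "(complex \<Rightarrow> complex) \<Rightarrow> bool" where
  "H2 f \<longleftrightarrow>
     f holomorphic_on Cplus \<and>
     (\<exists>B. \<forall>x>0. (\<lambda>\<omega>. (cmod (f (Complex x \<omega>)))\<^sup>2) integrable_on UNIV \<and>
                 integral UNIV (\<lambda>\<omega>. (cmod (f (Complex x \<omega>)))\<^sup>2) \<le> B) \<and>
     (AE \<omega> in lborel. ((\<lambda>x. f (Complex x \<omega>)) \<longlongrightarrow> f (Complex 0 \<omega>)) (at_right 0)) \<and>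
     (\<lambda>\<omega>. f (Complex 0 \<omega>)) measurable_on UNIV \<and>
     (\<lambda>\<omega>. (cmod (f (Complex 0 \<omega>)))\<^sup>2) integrable_on UNIV"

definition h2_inner :: "(complex \<Rightarrow> complex) \<Rightarrow> (complex \<Rightarrow> complex) \<Rightarrow> complex" where
  "h2_inner F G = (1 / (2 * of_real pi)) *
      integral UNIV (\<lambda>\<omega>::real. cnj (F (\<i> * of_real \<omega>)) * G (\<i> * of_real \<omega>))"

definition kern :: "complex \<Rightarrow> complex \<Rightarrow> complex" where
  "kern \<mu> = (\<lambda>z. 1 / (z + cnj \<mu>))"

text \<open>V(mu) = span of v[mu_1],...,v[mu_n] (H2 elements are identified with functions
  agreeing on the open right half-plane).\<close>
definition Vspace :: "nat \<Rightarrow> (nat \<Rightarrow> complex) \<Rightarrow> (complex \<Rightarrow> complex) set" where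
  "Vspace n \<mu> = {f. H2 f \<and> (\<exists>c::nat \<Rightarrow> complex. \<forall>z\<in>Cplus. f z = (\<Sum>j<n. c j * kern (\<mu> j) z))}"

definition is_orth_proj :: "nat \<Rightarrow> (nat \<Rightarrow> complex)
     \<Rightarrow> ((complex \<Rightarrow> complex) \<Rightarrow> (complex \<Rightarrow> complex)) \<Rightarrow> bool" where
  "is_orth_proj n \<mu> P \<longleftrightarrow>
     (\<forall>F. H2 F \<longrightarrow> P F \<in> Vspace n \<mu> \<and>
          (\<forall>G\<in>Vspace n \<mu>. h2_inner G (\<lambda>z. F z - P F z) = 0))"

definition pderiv_param :: "(real^'p \<Rightarrow> complex \<Rightarrow> complex) \<Rightarrow> real^'p \<Rightarrow> 'p \<Rightarrow> complex \<Rightarrow> complex" where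
  "pderiv_param Hr \<theta> i = (\<lambda>z. vector_derivative (\<lambda>t::real. Hr (\<theta> + t *\<^sub>R axis i 1) z) (at 0))"

definition Tspace :: "(real^'p \<Rightarrow> complex \<Rightarrow> complex) \<Rightarrow> real^'p \<Rightarrow> (complex \<Rightarrow> complex) set" where
  "Tspace Hr \<theta> = {T. H2 T \<and> (\<exists>c::'p \<Rightarrow> complex.
       \<forall>z\<in>Cplus. T z = (\<Sum>i\<in>UNIV. c i * pderiv_param Hr \<theta> i z))}"

end

theory Submission
  imports Defs
begin

text \<open>Since the tangent space lies in the range of P, every T in it is orthogonal to the residual
  F - P F of F = H - Hr \<theta>h; the projected optimality condition says that T is orthogonal to P F
  as well, hence to their sum F.\<close>

lemma square_integrable_mult_cnj:
  fixes u v :: "real \<Rightarrow> complex"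
  assumes "u measurable_on UNIV" "v measurable_on UNIV"
    and "(\<lambda>w. (cmod (u w))\<^sup>2) integrable_on UNIV" "(\<lambda>w. (cmod (v w))\<^sup>2) integrable_on UNIV"
  shows "(\<lambda>w. cnj (u w) * v w) integrable_on UNIV"
proof (rule measurable_bounded_by_integrable_imp_integrable)
  have "(\<lambda>w. cnj (u w) * v w) measurable_on UNIV"
    using measurable_on_combine[OF assms(1,2), of "\<lambda>a b. cnj a * b"]
    by (simp add: continuous_intros)
  then show "(\<lambda>w. cnj (u w) * v w) \<in> borel_measurable (lebesgue_on UNIV)"
    by (simp add: measurable_on_iff_borel_measurable)
  show "(\<lambda>w. (cmod (u w))\<^sup>2 + (cmod (v w))\<^sup>2) integrable_on UNIV"
    using assms(3,4) by (rule integrable_add)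
  fix w
  have "2 * cmod (u w) * cmod (v w) \<le> (cmod (u w))\<^sup>2 + (cmod (v w))\<^sup>2"
    by (rule sum_squares_bound)
  moreover have "0 \<le> cmod (u w) * cmod (v w)" by simp
  ultimately show "norm (cnj (u w) * v w) \<le> (cmod (u w))\<^sup>2 + (cmod (v w))\<^sup>2"
    unfolding norm_mult complex_mod_cnj by linarith
qed simp

lemma square_integrable_diff:
  fixes u v :: "real \<Rightarrow> complex"
  assumes "u measurable_on UNIV" "v measurable_on UNIV"
    and u2: "(\<lambda>w. (cmod (u w))\<^sup>2) integrable_on UNIV"
    and v2: "(\<lambda>w. (cmod (v w))\<^sup>2) integrable_on UNIV"
  shows "(\<lambda>w. (cmod (u w - v w))\<^sup>2) integrable_on UNIV"
    and "integral UNIV (\<lambda>w. (cmod (u w - v w))\<^sup>2)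
           \<le> 2 * integral UNIV (\<lambda>w. (cmod (u w))\<^sup>2) + 2 * integral UNIV (\<lambda>w. (cmod (v w))\<^sup>2)"
proof -
  let ?d = "\<lambda>w. (cmod (u w - v w))\<^sup>2"
  define g where "g w = 2 * (cmod (u w))\<^sup>2 + 2 * (cmod (v w))\<^sup>2" for w
  have g: "g integrable_on UNIV"
    unfolding g_def using u2 v2 by (intro integrable_add) simp_all
  have bound: "?d w \<le> g w" for w
  proof -
    have "cmod (u w - v w) \<le> cmod (u w) + cmod (v w)" by (rule norm_triangle_ineq4)
    then have "?d w \<le> (cmod (u w) + cmod (v w))\<^sup>2" by (simp add: power_mono)
    also have "\<dots> \<le> g w"
      using sum_squares_bound[of "cmod (u w)" "cmod (v w)"] by (simp add: g_def power2_sum)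
    finally show ?thesis .
  qed
  show d: "?d integrable_on UNIV"
  proof (rule measurable_bounded_by_integrable_imp_integrable)
    have "?d measurable_on UNIV"
      using measurable_on_combine[OF assms(1,2), of "\<lambda>a b. (cmod (a - b))\<^sup>2"]
      by (simp add: continuous_intros)
    then show "?d \<in> borel_measurable (lebesgue_on UNIV)"
      by (simp add: measurable_on_iff_borel_measurable)
  qed (use g bound in auto)
  have "integral UNIV ?d \<le> integral UNIV g" by (rule integral_le[OF d g bound])
  also have "\<dots> = 2 * integral UNIV (\<lambda>w. (cmod (u w))\<^sup>2) + 2 * integral UNIV (\<lambda>w. (cmod (v w))\<^sup>2)"
    unfolding g_def using u2 v2 by (simp add: integral_add)
  finally show "integral UNIV ?d \<le> 2 * integral UNIV (\<lambda>w. (cmod (u w))\<^sup>2) + 2 * integral UNIV (\<lambda>w. (cmod (v w))\<^sup>2)" .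
qed

lemma Complex_zero_Re: "Complex 0 w = \<i> * of_real w"
  by (simp add: complex_eq_iff)

lemma H2_imaginary_axis:
  assumes "H2 f"
  shows "(\<lambda>w. f (\<i> * of_real w)) measurable_on UNIV"
    and "(\<lambda>w. (cmod (f (\<i> * of_real w)))\<^sup>2) integrable_on UNIV"
  using assms unfolding H2_def Complex_zero_Re by auto

lemma holomorphic_vertical_line_measurable:
  assumes "f holomorphic_on Cplus" "x > 0"
  shows "(\<lambda>w. f (Complex x w)) measurable_on UNIV"
proof (rule continuous_imp_measurable_on)
  have "continuous_on Cplus f"
    using assms(1) by (rule holomorphic_on_imp_continuous_on)
  moreover have "continuous_on UNIV (\<lambda>w. Complex x w)"
    by (simp add: Complex_eq continuous_intros)
  moreover have "range (\<lambda>w. Complex x w) \<subseteq> Cplus"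
    using assms(2) by (auto simp: Cplus_def)
  ultimately show "continuous_on UNIV (\<lambda>w. f (Complex x w))"
    using continuous_on_compose2 by blast
qed

lemma H2_diff:
  assumes f: "H2 f" and g: "H2 g"
  shows "H2 (\<lambda>z. f z - g z)"
proof -
  obtain Bf where Bf: "\<forall>x>0. (\<lambda>\<omega>. (cmod (f (Complex x \<omega>)))\<^sup>2) integrable_on UNIV \<and>
                 integral UNIV (\<lambda>\<omega>. (cmod (f (Complex x \<omega>)))\<^sup>2) \<le> Bf"
    using f unfolding H2_def by blast
  obtain Bg where Bg: "\<forall>x>0. (\<lambda>\<omega>. (cmod (g (Complex x \<omega>)))\<^sup>2) integrable_on UNIV \<and>
                 integral UNIV (\<lambda>\<omega>. (cmod (g (Complex x \<omega>)))\<^sup>2) \<le> Bg"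
    using g unfolding H2_def by blast
  have hf: "f holomorphic_on Cplus" and hg: "g holomorphic_on Cplus"
    using f g unfolding H2_def by auto
  have "\<forall>x>0. (\<lambda>\<omega>. (cmod (f (Complex x \<omega>) - g (Complex x \<omega>)))\<^sup>2) integrable_on UNIV \<and>
             integral UNIV (\<lambda>\<omega>. (cmod (f (Complex x \<omega>) - g (Complex x \<omega>)))\<^sup>2) \<le> 2 * Bf + 2 * Bg"
  proof (intro allI impI)
    fix x :: real assume x: "x > 0"
    from square_integrable_diff[OF holomorphic_vertical_line_measurable[OF hf x]
        holomorphic_vertical_line_measurable[OF hg x]
        Bf[rule_format, OF x, THEN conjunct1] Bg[rule_format, OF x, THEN conjunct1]]
    show "(\<lambda>\<omega>. (cmod (f (Complex x \<omega>) - g (Complex x \<omega>)))\<^sup>2) integrable_on UNIV \<and>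
             integral UNIV (\<lambda>\<omega>. (cmod (f (Complex x \<omega>) - g (Complex x \<omega>)))\<^sup>2) \<le> 2 * Bf + 2 * Bg"
      using Bf Bg x by fastforce
  qed
  moreover have "AE \<omega> in lborel.
      ((\<lambda>x. f (Complex x \<omega>) - g (Complex x \<omega>)) \<longlongrightarrow> f (Complex 0 \<omega>) - g (Complex 0 \<omega>)) (at_right 0)"
  proof -
    have "AE \<omega> in lborel. ((\<lambda>x. f (Complex x \<omega>)) \<longlongrightarrow> f (Complex 0 \<omega>)) (at_right 0)"
         "AE \<omega> in lborel. ((\<lambda>x. g (Complex x \<omega>)) \<longlongrightarrow> g (Complex 0 \<omega>)) (at_right 0)"
      using f g unfolding H2_def by auto
    then show ?thesis by eventually_elim (rule tendsto_diff)
  qed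
  moreover have "(\<lambda>\<omega>. f (Complex 0 \<omega>) - g (Complex 0 \<omega>)) measurable_on UNIV"
    using f g unfolding H2_def by (intro measurable_on_diff) auto
  moreover have "(\<lambda>\<omega>. (cmod (f (Complex 0 \<omega>) - g (Complex 0 \<omega>)))\<^sup>2) integrable_on UNIV"
    using f g unfolding H2_def by (intro square_integrable_diff(1)) auto
  moreover have "(\<lambda>z. f z - g z) holomorphic_on Cplus"
    using hf hg by (intro holomorphic_intros)
  ultimately show ?thesis unfolding H2_def by blast
qed

text \<open>H2 elements are determined by their values on the open half-plane, because the boundary
  values are radial limits.\<close>
lemma H2_boundary_values_eq:
  assumes f: "H2 f" and g: "H2 g" and eq: "\<forall>z\<in>Cplus. f z = g z"
  shows "AE \<omega> in lborel. f (Complex 0 \<omega>) = g (Complex 0 \<omega>)"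
proof -
  have "AE \<omega> in lborel. ((\<lambda>x. f (Complex x \<omega>)) \<longlongrightarrow> f (Complex 0 \<omega>)) (at_right 0)"
       "AE \<omega> in lborel. ((\<lambda>x. g (Complex x \<omega>)) \<longlongrightarrow> g (Complex 0 \<omega>)) (at_right 0)"
    using f g unfolding H2_def by auto
  then show ?thesis
  proof eventually_elim
    case (elim \<omega>)
    have "\<forall>\<^sub>F x in at_right 0. f (Complex x \<omega>) = g (Complex x \<omega>)"
      using eventually_at_right_less[of "0::real"]
      by eventually_elim (use eq in \<open>auto simp: Cplus_def\<close>)
    with elim(1) have "((\<lambda>x. g (Complex x \<omega>)) \<longlongrightarrow> f (Complex 0 \<omega>)) (at_right 0)"
      by (rule Lim_transform_eventually)
    with elim(2) show ?case
      using tendsto_unique[OF trivial_limit_at_right_real] by blast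
  qed
qed

lemma h2_inner_cong_left:
  assumes "H2 f" "H2 g" "\<forall>z\<in>Cplus. f z = g z"
  shows "h2_inner f X = h2_inner g X"
proof -
  have "AE \<omega> in lebesgue. f (\<i> * of_real \<omega>) = g (\<i> * of_real \<omega>)"
    using H2_boundary_values_eq[OF assms] unfolding Complex_zero_Re by (rule AE_completion)
  then obtain N where N: "negligible N" "\<And>\<omega>. \<omega> \<notin> N \<Longrightarrow> f (\<i> * of_real \<omega>) = g (\<i> * of_real \<omega>)"
    unfolding eventually_ae_filter_negligible by blast
  have "integral UNIV (\<lambda>\<omega>::real. cnj (f (\<i> * of_real \<omega>)) * X (\<i> * of_real \<omega>))
      = integral UNIV (\<lambda>\<omega>::real. cnj (g (\<i> * of_real \<omega>)) * X (\<i> * of_real \<omega>))"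
    by (rule integral_spike[OF N(1)]) (use N(2) in auto)
  then show ?thesis unfolding h2_inner_def by simp
qed

lemma h2_inner_commute: "h2_inner F G = cnj (h2_inner G F)"
  unfolding h2_inner_def by (simp add: integral_cnj mult.commute)

lemma h2_inner_diff_left:
  assumes "H2 f" "H2 g" "H2 h"
  shows "h2_inner (\<lambda>z. f z - g z) h = h2_inner f h - h2_inner g h"
proof -
  have "(\<lambda>w. cnj (f (\<i> * of_real w)) * h (\<i> * of_real w)) integrable_on UNIV"
       "(\<lambda>w. cnj (g (\<i> * of_real w)) * h (\<i> * of_real w)) integrable_on UNIV"
    using assms by (auto intro: square_integrable_mult_cnj simp: H2_imaginary_axis)
  then show ?thesis
    unfolding h2_inner_def by (simp add: integral_diff algebra_simps)
qed

lemma orth_proj_residual_orthogonal: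
  assumes P: "is_orth_proj n \<mu> P" and F: "H2 F" and G: "H2 G"
    and T: "H2 T" "\<forall>z\<in>Cplus. T z = P G z"
  shows "h2_inner (\<lambda>z. F z - P F z) T = 0"
proof -
  have PG: "P G \<in> Vspace n \<mu>" and orth: "\<forall>V\<in>Vspace n \<mu>. h2_inner V (\<lambda>z. F z - P F z) = 0"
    using P F G unfolding is_orth_proj_def by auto
  have "h2_inner T (\<lambda>z. F z - P F z) = h2_inner (P G) (\<lambda>z. F z - P F z)"
    using PG T by (intro h2_inner_cong_left) (auto simp: Vspace_def)
  also have "\<dots> = 0" using orth PG by blast
  finally show ?thesis by (metis h2_inner_commute complex_cnj_zero)
qed

theorem lemma1p1:
  fixes H :: "complex \<Rightarrow> complex"
    and n :: nat and \<mu> :: "nat \<Rightarrow> complex"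
    and P :: "(complex \<Rightarrow> complex) \<Rightarrow> (complex \<Rightarrow> complex)"
    and Hr :: "real^'p \<Rightarrow> complex \<Rightarrow> complex"
    and D :: "(real^'p) set" and \<theta>h :: "real^'p"
  assumes H: "H2 H"
    and n: "n \<ge> 1"
    and mu: "\<forall>j<n. 0 < Re (\<mu> j)"
    and P: "is_orth_proj n \<mu> P"
    and D: "open D"
    and S: "\<forall>\<theta>\<in>D. H2 (Hr \<theta>)"
    and th: "\<theta>h \<in> D"
    and diff: "\<forall>i. \<forall>z\<in>Cplus. (\<lambda>t::real. Hr (\<theta>h + t *\<^sub>R axis i 1) z) differentiable (at 0)"
    and partH2: "\<forall>i. \<exists>G. H2 G \<and> (\<forall>z\<in>Cplus. G z = pderiv_param Hr \<theta>h i z)"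
    and projopt: "\<forall>T\<in>Tspace Hr \<theta>h. h2_inner (P (\<lambda>z. H z - Hr \<theta>h z)) T = 0"
    and range: "\<forall>T\<in>Tspace Hr \<theta>h. \<exists>G. H2 G \<and> (\<forall>z\<in>Cplus. T z = P G z)"
  shows "\<forall>T\<in>Tspace Hr \<theta>h. h2_inner (\<lambda>z. H z - Hr \<theta>h z) T = 0"
proof
  fix T assume T: "T \<in> Tspace Hr \<theta>h"
  define F where "F = (\<lambda>z. H z - Hr \<theta>h z)"
  have F: "H2 F" unfolding F_def using H S th by (simp add: H2_diff)
  have PF: "H2 (P F)" using P F by (auto simp: is_orth_proj_def Vspace_def)
  have HT: "H2 T" using T by (simp add: Tspace_def)
  obtain G where "H2 G" "\<forall>z\<in>Cplus. T z = P G z" using range T by blast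
  then have "h2_inner (\<lambda>z. F z - P F z) T = 0"
    using orth_proj_residual_orthogonal[OF P F] HT by blast
  moreover have "h2_inner (P F) T = 0" using projopt T unfolding F_def by blast
  ultimately show "h2_inner (\<lambda>z. H z - Hr \<theta>h z) T = 0"
    using h2_inner_diff_left[OF F PF HT] unfolding F_def by simp
qed

end
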